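(* Let $\mathcal{X}\subset\mathbb{R}^d$ be nonempty, closed, convex and compact with diameter $D:=\max_{x,y\in\mathcal{X}}\|x-y\|$. Let $\Phi:\mathcal{X}\to\mathbb{R}$ be differentiable with $L$-Lipschitz gradient, and set $G:=\max_{x\in\mathcal{X}}\|\nabla\Phi(x)\|$, $\Phi_{\max}:=\max_{\mathcal{X}}\Phi$, $\Phi_{\min}:=\min_{\mathcal{X}}\Phi$. Let $F:\mathcal{X}\to\mathbb{R}^d$ satisfy $F(x)=-\nabla\Phi(x)+R(x)$ with $\|R(x)\|\le\varepsilon$ for all $x\in\mathcal{X}$. Run $x_{t+1}=\operatorname{Proj}_{\mathcal{X}}(x_t+\eta\nabla\Phi(x_t))$, $t=0,\dots,T-1$, from $x_0\in\mathcal{X}$ with $0<\eta\le1/L$. Define $\mathcal{G}_\eta(x_t):=\frac1\eta(x_{t+1}-x_t)$, pick $\hat t\in\arg\min_{0\le t\le T-1}\|\mathcal{G}_\eta(x_t)\|$ and set $\hat x_T:=x_{\hat t}$. Then $$\operatorname{Gap}(\hat x_T)\le (D+\eta G)\sqrt{\frac{2(\Phi_{\max}-\Phi_{\min})}{T\eta}}+D\varepsilon.$$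
   Context: For $\bar x\in\mathcal{X}$, the (Stampacchia) duality gap of the operator $F$ is $\operatorname{Gap}(\bar x):=\max_{x\in\mathcal{X}}\langle F(\bar x),\bar x-x\rangle$ with the Euclidean inner product. $\operatorname{Proj}_{\mathcal{X}}$ is Euclidean projection onto $\mathcal{X}$. *)

theory Defs
  imports "HOL-Analysis.Analysis"
begin

definition Gap :: "('a::euclidean_space \<Rightarrow> 'a) \<Rightarrow> 'a set \<Rightarrow> 'a \<Rightarrow> real" where
  "Gap F X xbar = (SUP x\<in>X. inner (F xbar) (xbar - x))"

abbreviation Proj :: "'a::euclidean_space set \<Rightarrow> 'a \<Rightarrow> 'a" where
  "Proj X y \<equiv> closest_point X y"

end

theory Submission
  imports Defs
begin

text \<open>
  Projected gradient ascent on \<open>\<Phi>\<close> increases \<open>\<Phi>\<close> by at least \<open>\<parallel>x\<^sub>t\<^sub>+\<^sub>1 - x\<^sub>t\<parallel>\<^sup>2 / (2\<eta>)\<close> per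
  step (descent lemma plus the obtuse-angle property of the projection), so the step lengths
  have square sum at most \<open>2\<eta>(\<Phi>\<^sub>m\<^sub>a\<^sub>x - \<Phi>\<^sub>m\<^sub>i\<^sub>n)\<close> and the shortest one is at most
  \<open>\<eta> sqrt(2(\<Phi>\<^sub>m\<^sub>a\<^sub>x - \<Phi>\<^sub>m\<^sub>i\<^sub>n)/(T\<eta>))\<close>. At any point the variational inequality of the projection
  bounds \<open>\<langle>-\<nabla>\<Phi>(x\<^sub>t), x\<^sub>t - z\<rangle>\<close> by \<open>(D + \<eta>G)\<parallel>x\<^sub>t\<^sub>+\<^sub>1 - x\<^sub>t\<parallel>/\<eta>\<close>, and the perturbation \<open>R\<close>
  contributes at most \<open>D\<epsilon>\<close>.
\<close>

lemma lipschitz_gradient_lower_bound: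
  fixes X :: "'a::euclidean_space set" and Phi :: "'a \<Rightarrow> real" and g :: "'a \<Rightarrow> 'a"
  assumes "convex X" and a: "a \<in> X" and b: "b \<in> X"
    and Phi_grad: "\<And>y. y \<in> X \<Longrightarrow> (Phi has_derivative (\<lambda>h. inner (g y) h)) (at y within X)"
    and g_Lip: "\<And>y z. y \<in> X \<Longrightarrow> z \<in> X \<Longrightarrow> norm (g y - g z) \<le> L * norm (y - z)"
  shows "Phi a + inner (g a) (b - a) - L / 2 * (norm (b - a))\<^sup>2 \<le> Phi b"
proof -
  define h where "h = b - a"
  define \<gamma> where "\<gamma> s = a + s *\<^sub>R h" for s :: real
  define \<psi>' where "\<psi>' s = inner (g (\<gamma> s) - g a) h + L * s * (norm h)\<^sup>2" for s
  define \<psi> where "\<psi> s = Phi (\<gamma> s) - s * inner (g a) h + L * s\<^sup>2 * (norm h)\<^sup>2 / 2" for s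
  have \<gamma>_in: "\<gamma> s \<in> X" if "s \<in> {0..1}" for s
  proof -
    have "\<gamma> s = (1 - s) *\<^sub>R a + s *\<^sub>R b" by (simp add: \<gamma>_def h_def algebra_simps)
    then show ?thesis using that \<open>convex X\<close> a b by (simp add: convex_alt)
  qed
  have \<psi>_deriv: "(\<psi> has_derivative (\<lambda>t. t * \<psi>' s)) (at s within {0..1})" if "s \<in> {0..1}" for s
  proof -
    have \<gamma>_deriv: "(\<gamma> has_derivative (\<lambda>t. t *\<^sub>R h)) (at s within {0..1})"
      unfolding \<gamma>_def by (auto intro!: derivative_eq_intros)
    have "(Phi has_derivative (\<lambda>v. inner (g (\<gamma> s)) v)) (at (\<gamma> s) within \<gamma> ` {0..1})"
      using Phi_grad[OF \<gamma>_in[OF that]] by (rule has_derivative_subset) (use \<gamma>_in in auto)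
    from diff_chain_within[OF \<gamma>_deriv this]
    have "((\<lambda>s. Phi (\<gamma> s)) has_derivative (\<lambda>t. inner (g (\<gamma> s)) (t *\<^sub>R h)))
        (at s within {0..1})"
      by (simp add: o_def)
    then have "(\<psi> has_derivative (\<lambda>t. inner (g (\<gamma> s)) (t *\<^sub>R h) - t * inner (g a) h
        + L * (2 * s * t) * (norm h)\<^sup>2 / 2)) (at s within {0..1})"
      unfolding \<psi>_def by (auto intro!: derivative_eq_intros)
    then show ?thesis by (simp add: \<psi>'_def inner_diff_left algebra_simps)
  qed
  have \<psi>'_nonneg: "0 \<le> \<psi>' s" if "s \<in> {0..1}" for s
  proof -
    have "norm (g (\<gamma> s) - g a) \<le> L * (s * norm h)"
      using g_Lip[OF \<gamma>_in[OF that] a] that by (simp add: \<gamma>_def)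
    then have "- inner (g (\<gamma> s) - g a) h \<le> L * (s * norm h) * norm h"
      using Cauchy_Schwarz_ineq2[of "g (\<gamma> s) - g a" h] mult_right_mono[of _ _ "norm h"] by force
    then show ?thesis by (simp add: \<psi>'_def power2_eq_square algebra_simps)
  qed
  have "\<psi> 0 \<le> \<psi> 1"
  proof (rule DERIV_nonneg_imp_increasing_open[of 0 1 \<psi>])
    show "continuous_on {0..1} \<psi>"
      using \<psi>_deriv by (rule has_derivative_continuous_on)
    fix s :: real assume s: "0 < s" "s < 1"
    then have "(\<psi> has_derivative (\<lambda>t. \<psi>' s * t)) (at s)"
      using \<psi>_deriv[of s] by (simp add: at_within_Icc_at mult.commute)
    then show "\<exists>y. DERIV \<psi> s :> y \<and> 0 \<le> y"
      using \<psi>'_nonneg[of s] s by (auto simp: has_field_derivative_def)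
  qed simp
  then show ?thesis by (simp add: \<psi>_def \<gamma>_def h_def)
qed

lemma closest_point_step_norm_sq_le:
  fixes X :: "'a::euclidean_space set"
  assumes "convex X" "closed X" "a \<in> X"
  shows "(norm (closest_point X (a + v) - a))\<^sup>2 \<le> inner v (closest_point X (a + v) - a)"
  using closest_point_dot[OF assms, of "a + v"]
  by (simp add: power2_norm_eq_inner inner_diff_left inner_diff_right inner_add_left inner_commute
      algebra_simps)

definition gradient_mapping :: "'a::euclidean_space set \<Rightarrow> ('a \<Rightarrow> 'a) \<Rightarrow> real \<Rightarrow> 'a \<Rightarrow> 'a" where
  "gradient_mapping X g eta a = (1 / eta) *\<^sub>R (closest_point X (a + eta *\<^sub>R g a) - a)"

lemma projected_gradient_ascent_step:
  fixes X :: "'a::euclidean_space set" and Phi :: "'a \<Rightarrow> real" and g :: "'a \<Rightarrow> 'a"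
  assumes "convex X" "closed X" and a: "a \<in> X"
    and Phi_grad: "\<And>y. y \<in> X \<Longrightarrow> (Phi has_derivative (\<lambda>h. inner (g y) h)) (at y within X)"
    and g_Lip: "\<And>y z. y \<in> X \<Longrightarrow> z \<in> X \<Longrightarrow> norm (g y - g z) \<le> L * norm (y - z)"
    and "0 < eta" "eta * L \<le> 1"
  shows "(norm (gradient_mapping X g eta a))\<^sup>2 \<le> 2 / eta * (Phi (closest_point X (a + eta *\<^sub>R g a)) - Phi a)"
proof -
  define b where "b = closest_point X (a + eta *\<^sub>R g a)"
  have "b \<in> X" unfolding b_def using a \<open>closed X\<close> by (auto intro: closest_point_in_set)
  have step: "(norm (b - a))\<^sup>2 \<le> eta * inner (g a) (b - a)"
    using closest_point_step_norm_sq_le[OF \<open>convex X\<close> \<open>closed X\<close> a, of "eta *\<^sub>R g a"]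
    by (simp add: b_def)
  have "eta * inner (g a) (b - a) \<le> eta * (Phi b - Phi a + L / 2 * (norm (b - a))\<^sup>2)"
    using lipschitz_gradient_lower_bound[OF \<open>convex X\<close> a \<open>b \<in> X\<close> Phi_grad g_Lip] \<open>0 < eta\<close>
    by (intro mult_left_mono) auto
  moreover have "eta * L * (norm (b - a))\<^sup>2 \<le> (norm (b - a))\<^sup>2"
    using mult_right_mono[OF \<open>eta * L \<le> 1\<close>, of "(norm (b - a))\<^sup>2"] by simp
  ultimately have "(norm (b - a))\<^sup>2 \<le> 2 * eta * (Phi b - Phi a)"
    using step by (simp add: algebra_simps)
  then have "(norm (b - a))\<^sup>2 / eta\<^sup>2 \<le> 2 * eta * (Phi b - Phi a) / eta\<^sup>2"
    by (simp add: divide_right_mono)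
  moreover have "norm (gradient_mapping X g eta a) = norm (b - a) / eta"
    using \<open>0 < eta\<close> by (simp add: gradient_mapping_def b_def)
  ultimately show ?thesis
    using \<open>0 < eta\<close> by (simp add: b_def power_divide power2_eq_square)
qed

lemma le_sqrt_of_telescoping_squares:
  fixes u f :: "nat \<Rightarrow> real"
  assumes "T > 0" "0 \<le> s" "\<And>t. t < T \<Longrightarrow> s \<le> u t"
    and "\<And>t. t < T \<Longrightarrow> (u t)\<^sup>2 \<le> c * (f (Suc t) - f t)"
  shows "s \<le> sqrt (c * (f T - f 0) / T)"
proof (rule real_le_rsqrt)
  have "real T * s\<^sup>2 = (\<Sum>t<T. s\<^sup>2)" by simp
  also have "\<dots> \<le> (\<Sum>t<T. (u t)\<^sup>2)" using assms(2,3) by (intro sum_mono power_mono) auto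
  also have "\<dots> \<le> (\<Sum>t<T. c * (f (Suc t) - f t))" using assms(4) by (intro sum_mono) auto
  also have "\<dots> = c * (f T - f 0)" by (simp add: sum_distrib_left[symmetric] sum_lessThan_telescope)
  finally show "s\<^sup>2 \<le> c * (f T - f 0) / T" using assms(1) by (simp add: field_simps)
qed

lemma projected_gradient_iterates_in:
  fixes X :: "'a::euclidean_space set"
  assumes "closed X" "x 0 \<in> X"
    and "\<And>t. t < T \<Longrightarrow> x (Suc t) = closest_point X (x t + eta *\<^sub>R g (x t))"
    and "t \<le> T"
  shows "x t \<in> X"
  using assms(4) by (induction t) (auto simp: assms(2,3) intro: closest_point_in_set[OF \<open>closed X\<close>])

lemma projected_gradient_ascent_min_gradient_mapping_le:
  fixes X :: "'a::euclidean_space set" and Phi :: "'a \<Rightarrow> real" and g :: "'a \<Rightarrow> 'a"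
  assumes "convex X" "compact X"
    and Phi_grad: "\<And>y. y \<in> X \<Longrightarrow> (Phi has_derivative (\<lambda>h. inner (g y) h)) (at y within X)"
    and g_Lip: "\<And>y z. y \<in> X \<Longrightarrow> z \<in> X \<Longrightarrow> norm (g y - g z) \<le> L * norm (y - z)"
    and "0 < eta" "eta * L \<le> 1" "T > 0" "x 0 \<in> X"
    and iter: "\<And>t. t < T \<Longrightarrow> x (Suc t) = closest_point X (x t + eta *\<^sub>R g (x t))"
    and s_min: "\<And>t. t < T \<Longrightarrow> norm (gradient_mapping X g eta (x s)) \<le> norm (gradient_mapping X g eta (x t))"
  shows "norm (gradient_mapping X g eta (x s))
    \<le> sqrt (2 * ((SUP y\<in>X. Phi y) - (INF y\<in>X. Phi y)) / (real T * eta))"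
proof -
  have "closed X" using \<open>compact X\<close> by (rule compact_imp_closed)
  have x_in: "x t \<in> X" if "t \<le> T" for t
    using \<open>closed X\<close> \<open>x 0 \<in> X\<close> iter that by (rule projected_gradient_iterates_in)
  have ascent: "(norm (gradient_mapping X g eta (x t)))\<^sup>2 \<le> 2 / eta * (Phi (x (Suc t)) - Phi (x t))"
    if "t < T" for t
    using projected_gradient_ascent_step[OF \<open>convex X\<close> \<open>closed X\<close> x_in Phi_grad g_Lip
        \<open>0 < eta\<close> \<open>eta * L \<le> 1\<close>] that
    by (simp add: iter)
  have "bounded (Phi ` X)"
    by (intro compact_imp_bounded compact_continuous_image \<open>compact X\<close>
        has_derivative_continuous_on[OF Phi_grad])
  then have osc: "Phi (x T) - Phi (x 0) \<le> (SUP y\<in>X. Phi y) - (INF y\<in>X. Phi y)"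
    using x_in[OF order_refl] \<open>x 0 \<in> X\<close>
    by (intro diff_mono cSUP_upper cINF_lower bounded_imp_bdd_above bounded_imp_bdd_below)
  have "norm (gradient_mapping X g eta (x s)) \<le> sqrt (2 / eta * (Phi (x T) - Phi (x 0)) / T)"
    using le_sqrt_of_telescoping_squares[where u = "\<lambda>t. norm (gradient_mapping X g eta (x t))"
        and f = "\<lambda>t. Phi (x t)", OF \<open>T > 0\<close> norm_ge_zero s_min ascent] .
  also have "\<dots> \<le> sqrt (2 / eta * ((SUP y\<in>X. Phi y) - (INF y\<in>X. Phi y)) / T)"
    using osc \<open>0 < eta\<close> by (intro real_sqrt_le_mono divide_right_mono mult_left_mono) auto
  finally show ?thesis
    by (simp add: mult.commute)
qed

lemma lipschitz_norm_le_SUP_norm: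
  fixes g :: "'a::real_normed_vector \<Rightarrow> 'b::real_normed_vector"
  assumes "compact X" "0 \<le> L"
    and "\<And>y z. y \<in> X \<Longrightarrow> z \<in> X \<Longrightarrow> norm (g y - g z) \<le> L * norm (y - z)"
    and "y \<in> X"
  shows "norm (g y) \<le> (SUP z\<in>X. norm (g z))"
proof -
  have "continuous_on X g"
    using assms(2,3) by (intro lipschitz_on_continuous_on[of L] lipschitz_onI) (auto simp: dist_norm)
  then have "bounded (g ` X)"
    using \<open>compact X\<close> by (intro compact_imp_bounded compact_continuous_image)
  then show ?thesis
    using \<open>y \<in> X\<close> by (auto intro!: cSUP_upper bounded_imp_bdd_above simp: bounded_norm_comp)
qed

lemma projected_gradient_variational_bound:
  fixes X :: "'a::euclidean_space set"
  assumes "convex X" "closed X" "bounded X" "a \<in> X" "z \<in> X" "0 < eta"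
  shows "inner (g a) (z - a) \<le> (diameter X + eta * norm (g a)) * norm (gradient_mapping X g eta a)"
proof -
  define b where "b = closest_point X (a + eta *\<^sub>R g a)"
  have "b \<in> X" unfolding b_def using assms by (auto intro: closest_point_in_set)
  have G: "norm (gradient_mapping X g eta a) = norm (b - a) / eta"
    using \<open>0 < eta\<close> by (simp add: gradient_mapping_def b_def)
  have "eta * inner (g a) (z - b) \<le> inner (b - a) (z - b)"
    using closest_point_dot[OF \<open>convex X\<close> \<open>closed X\<close> \<open>z \<in> X\<close>, of "a + eta *\<^sub>R g a"]
    by (simp add: b_def inner_diff_left inner_add_left algebra_simps)
  also have "\<dots> \<le> norm (b - a) * diameter X"
    using norm_cauchy_schwarz[of "b - a" "z - b"]
      diameter_bounded_bound[OF \<open>bounded X\<close> \<open>z \<in> X\<close> \<open>b \<in> X\<close>]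
    by (smt (verit) dist_norm mult_left_mono norm_ge_zero norm_minus_commute)
  finally have "inner (g a) (z - b) \<le> diameter X * (norm (b - a) / eta)"
    using \<open>0 < eta\<close> by (simp add: field_simps)
  moreover have "inner (g a) (b - a) \<le> eta * norm (g a) * (norm (b - a) / eta)"
    using norm_cauchy_schwarz[of "g a" "b - a"] \<open>0 < eta\<close> by simp
  ultimately show ?thesis
    unfolding G by (smt (verit) inner_diff_right distrib_right)
qed

lemma Gap_le_gradient_mapping:
  fixes X :: "'a::euclidean_space set" and F g :: "'a \<Rightarrow> 'a"
  assumes "X \<noteq> {}" "convex X" "closed X" "bounded X" "a \<in> X" "0 < eta"
    and "F a = - g a + r" "norm r \<le> eps"
  shows "Gap F X a \<le> (diameter X + eta * norm (g a)) * norm (gradient_mapping X g eta a) + diameter X * eps"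
  unfolding Gap_def
proof (rule cSUP_least[OF \<open>X \<noteq> {}\<close>])
  fix z assume "z \<in> X"
  have "inner r (a - z) \<le> eps * diameter X"
    using norm_cauchy_schwarz[of r "a - z"] diameter_bounded_bound[OF \<open>bounded X\<close> \<open>a \<in> X\<close> \<open>z \<in> X\<close>]
      \<open>norm r \<le> eps\<close>
    by (smt (verit) dist_norm mult_mono norm_ge_zero)
  moreover have "inner (F a) (a - z) = inner (g a) (z - a) + inner r (a - z)"
    by (simp add: \<open>F a = - g a + r\<close> inner_add_left inner_diff_left inner_diff_right algebra_simps)
  ultimately show "inner (F a) (a - z)
      \<le> (diameter X + eta * norm (g a)) * norm (gradient_mapping X g eta a) + diameter X * eps"
    using projected_gradient_variational_bound[OF assms(2-5) \<open>z \<in> X\<close> \<open>0 < eta\<close>, of g]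
    by (simp add: mult.commute)
qed

theorem theorem6p7:
  fixes X :: "'a::euclidean_space set"
    and Phi :: "'a \<Rightarrow> real" and gradPhi :: "'a \<Rightarrow> 'a"
    and F R :: "'a \<Rightarrow> 'a"
    and L eta eps :: real and T :: nat and x :: "nat \<Rightarrow> 'a" and that :: nat
  assumes X_ne: "X \<noteq> {}" and X_closed: "closed X" and X_convex: "convex X"
      and X_compact: "compact X"
    and Phi_grad: "\<And>y. y \<in> X \<Longrightarrow> (Phi has_derivative (\<lambda>h. inner (gradPhi y) h)) (at y within X)"
    and grad_Lip: "\<And>y z. y \<in> X \<Longrightarrow> z \<in> X \<Longrightarrow> norm (gradPhi y - gradPhi z) \<le> L * norm (y - z)"
    and F_def: "\<And>y. y \<in> X \<Longrightarrow> F y = - gradPhi y + R y"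
    and R_bound: "\<And>y. y \<in> X \<Longrightarrow> norm (R y) \<le> eps"
    and T_pos: "T > 0"
    and x0: "x 0 \<in> X"
    and iter: "\<And>t. t < T \<Longrightarrow> x (Suc t) = Proj X (x t + eta *\<^sub>R gradPhi (x t))"
    and eta_pos: "0 < eta" and eta_le: "eta \<le> 1 / L"
    and that_lt: "that < T"
    and that_min: "\<And>t. t < T \<Longrightarrow>
        norm ((1 / eta) *\<^sub>R (x (Suc that) - x that)) \<le> norm ((1 / eta) *\<^sub>R (x (Suc t) - x t))"
  shows "Gap F X (x that)
    \<le> (diameter X + eta * (SUP y\<in>X. norm (gradPhi y)))
        * sqrt (2 * ((SUP y\<in>X. Phi y) - (INF y\<in>X. Phi y)) / (real T * eta))
      + diameter X * eps"
proof -
  have X_bounded: "bounded X" using X_compact by (rule compact_imp_bounded)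
  have L_pos: "0 < L"
    using order.strict_trans2[OF eta_pos eta_le] by simp
  then have etaL: "eta * L \<le> 1"
    using eta_le by (simp add: field_simps)
  have x_that: "x that \<in> X"
    using X_closed x0 iter less_imp_le[OF that_lt] by (rule projected_gradient_iterates_in)
  have G_min: "norm (gradient_mapping X gradPhi eta (x that))
      \<le> norm (gradient_mapping X gradPhi eta (x t))" if "t < T" for t
    using that_min[OF that] by (simp add: gradient_mapping_def iter that that_lt)
  have G_bound: "norm (gradient_mapping X gradPhi eta (x that))
      \<le> sqrt (2 * ((SUP y\<in>X. Phi y) - (INF y\<in>X. Phi y)) / (real T * eta))"
    by (rule projected_gradient_ascent_min_gradient_mapping_le[OF X_convex X_compact Phi_grad
          grad_Lip eta_pos etaL T_pos x0 iter G_min])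
  have grad_bound: "norm (gradPhi (x that)) \<le> (SUP y\<in>X. norm (gradPhi y))"
    using X_compact less_imp_le[OF L_pos] grad_Lip x_that by (rule lipschitz_norm_le_SUP_norm)
  have "Gap F X (x that)
      \<le> (diameter X + eta * norm (gradPhi (x that))) * norm (gradient_mapping X gradPhi eta (x that))
        + diameter X * eps"
    by (rule Gap_le_gradient_mapping[where F = F and g = gradPhi, OF X_ne X_convex X_closed X_bounded
          x_that eta_pos F_def[OF x_that] R_bound[OF x_that]])
  also have "\<dots> \<le> (diameter X + eta * (SUP y\<in>X. norm (gradPhi y)))
        * sqrt (2 * ((SUP y\<in>X. Phi y) - (INF y\<in>X. Phi y)) / (real T * eta)) + diameter X * eps"
    using G_bound grad_bound eta_pos diameter_ge_0[OF X_bounded] order_trans[OF norm_ge_zero grad_bound]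
    by (intro add_right_mono mult_mono add_left_mono mult_left_mono) auto
  finally show ?thesis .
qed

end
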